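(* For every $q\in X^*\setminus\{e\}$, the set of $\omega$-words $\xi\in X^\omega$ that are quasiperiodic with quasiperiod $q$ equals $P_q^\omega$.
   Context: $X$ is a finite alphabet with $|X|\ge 2$; $X^*$ the finite words (empty word $e$), $X^\omega$ the infinite words. $w\sqsubseteq\eta$ means $w$ is a prefix of $\eta$, $w\sqsubset\eta$ a proper prefix. For a language $L$, $L^\omega:=\{w_1w_2\cdots : w_i\in L\setminus\{e\}\}$. An $\omega$-word $\xi$ is quasiperiodic with quasiperiod $q$ if for every $j\in\mathbb{N}$ there is a prefix $u_j\sqsubseteq\xi$ with $j-|q|<|u_j|\le j$ and $u_j\cdot q\sqsubseteq\xi$. $P_q:=\{v: e\sqsubset v\sqsubseteq q\sqsubset v\cdot q\}$. *)

theory Defs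
  imports Main "HOL-Library.Sublist"
begin

definition omega_words :: "'a set \<Rightarrow> (nat \<Rightarrow> 'a) set" where
  "omega_words X = {\<xi>. \<forall>i. \<xi> i \<in> X}"

definition oprefix :: "'a list \<Rightarrow> (nat \<Rightarrow> 'a) \<Rightarrow> bool" where
  "oprefix w \<xi> \<longleftrightarrow> (\<forall>i < length w. w ! i = \<xi> i)"

text \<open>L^omega: infinite products w_1 w_2 ... of nonempty words of L.
  The infinite concatenation is characterised by all finite partial products being prefixes.\<close>
definition omega_power :: "'a list set \<Rightarrow> (nat \<Rightarrow> 'a) set" where
  "omega_power L = {\<xi>. \<exists>w :: nat \<Rightarrow> 'a list.
      (\<forall>i. w i \<in> L - {[]}) \<and> (\<forall>n. oprefix (concat (map w [0..<n])) \<xi>)}"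

definition quasiperiodic :: "(nat \<Rightarrow> 'a) \<Rightarrow> 'a list \<Rightarrow> bool" where
  "quasiperiodic \<xi> q \<longleftrightarrow> (\<forall>j::nat. \<exists>u. oprefix u \<xi>
      \<and> int j - int (length q) < int (length u) \<and> length u \<le> j \<and> oprefix (u @ q) \<xi>)"

definition Pq :: "'a list \<Rightarrow> 'a list set" where
  "Pq q = {v. strict_prefix [] v \<and> prefix v q \<and> strict_prefix q (v @ q)}"

end

theory Submission
  imports Defs
begin

(* Call a sequence of positions 0 = p 0 < p 1 < p 2 < ... with
   p (n+1) <= p n + |q| and an occurrence of q starting at every p n an
   occurrence chain of q in xi.  Both sides of the theorem are characterised
   by the existence of such a chain:
   - xi is quasiperiodic with quasiperiod q iff the starting positions of the
     occurrences of q meet every window (j - |q|, j], iff there is an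
     occurrence chain (chains are extracted greedily, and chains cover N);
   - xi is in P_q^omega iff there is an occurrence chain: the factors between
     consecutive chain positions lie in P_q, and conversely, for a
     factorisation into words of P_q, the defining property q <= v q
     propagates the occurrence of q from each cut point to the previous one.
   Finally the letters of xi are letters of q, which settles omega_words X. *)

definition occ :: "(nat \<Rightarrow> 'a) \<Rightarrow> 'a list \<Rightarrow> nat \<Rightarrow> bool" where
  "occ \<xi> q k \<longleftrightarrow> (\<forall>i<length q. \<xi> (k + i) = q ! i)"

definition occ_chain :: "(nat \<Rightarrow> 'a) \<Rightarrow> 'a list \<Rightarrow> (nat \<Rightarrow> nat) \<Rightarrow> bool" where
  "occ_chain \<xi> q p \<longleftrightarrow> p 0 = 0 \<and>
     (\<forall>n. p n < p (Suc n) \<and> p (Suc n) \<le> p n + length q \<and> occ \<xi> q (p n))"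

lemma oprefix_map [simp]: "oprefix (map \<xi> [0..<n]) \<xi>"
  by (simp add: oprefix_def)

lemma oprefix_append_iff: "oprefix (u @ v) \<xi> \<longleftrightarrow> oprefix u \<xi> \<and> occ \<xi> v (length u)"
proof
  assume uv: "oprefix (u @ v) \<xi>"
  have "u ! i = \<xi> i" if "i < length u" for i
    using uv that unfolding oprefix_def by (metis length_append nth_append trans_less_add1)
  moreover have "\<xi> (length u + i) = v ! i" if "i < length v" for i
    using uv that unfolding oprefix_def
    by (metis length_append nat_add_left_cancel_less nth_append_length_plus)
  ultimately show "oprefix u \<xi> \<and> occ \<xi> v (length u)"
    by (simp add: oprefix_def occ_def)
next
  assume "oprefix u \<xi> \<and> occ \<xi> v (length u)"
  then show "oprefix (u @ v) \<xi>"
    unfolding oprefix_def occ_def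
    by (metis add_diff_inverse_nat length_append nat_add_left_cancel_less nth_append)
qed

lemma quasiperiodic_iff_occ:
  "quasiperiodic \<xi> q \<longleftrightarrow> (\<forall>j. \<exists>k \<le> j. j < k + length q \<and> occ \<xi> q k)"
proof -
  have "(\<exists>u. oprefix u \<xi> \<and> int j - int (length q) < int (length u) \<and> length u \<le> j
            \<and> oprefix (u @ q) \<xi>) \<longleftrightarrow> (\<exists>k \<le> j. j < k + length q \<and> occ \<xi> q k)" for j
  proof
    assume "\<exists>u. oprefix u \<xi> \<and> int j - int (length q) < int (length u) \<and> length u \<le> j
              \<and> oprefix (u @ q) \<xi>"
    then show "\<exists>k \<le> j. j < k + length q \<and> occ \<xi> q k"
      by (force simp: oprefix_append_iff)
  next
    assume "\<exists>k \<le> j. j < k + length q \<and> occ \<xi> q k"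
    then obtain k where "k \<le> j" "j < k + length q" "occ \<xi> q k" by blast
    then show "\<exists>u. oprefix u \<xi> \<and> int j - int (length q) < int (length u) \<and> length u \<le> j
                 \<and> oprefix (u @ q) \<xi>"
      by (intro exI[of _ "map \<xi> [0..<k]"]) (auto simp: oprefix_append_iff)
  qed
  then show ?thesis unfolding quasiperiodic_def by blast
qed

lemma occ_chain_covers:
  assumes "occ_chain \<xi> q p"
  shows "\<exists>n. p n \<le> j \<and> j < p (Suc n)"
proof (induction j)
  case 0
  have "p 0 = 0" "p 0 < p (Suc 0)" using assms unfolding occ_chain_def by blast+
  then show ?case by (intro exI[of _ 0]) simp
next
  case (Suc j)
  then obtain n where n: "p n \<le> j" "j < p (Suc n)" by blast
  show ?case
  proof (cases "Suc j < p (Suc n)")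
    case True
    then show ?thesis using n by (intro exI[of _ n]) simp
  next
    case False
    then have "p (Suc n) = Suc j" using n by simp
    then show ?thesis using assms unfolding occ_chain_def by (metis order_refl)
  qed
qed

text \<open>A chain is built greedily: from an occurrence at k, the window ending at
  k + |q| yields a later occurrence at distance at most |q|.\<close>
lemma quasiperiodic_iff_occ_chain: "quasiperiodic \<xi> q \<longleftrightarrow> (\<exists>p. occ_chain \<xi> q p)"
proof
  assume "quasiperiodic \<xi> q"
  then have cover: "\<forall>j. \<exists>k \<le> j. j < k + length q \<and> occ \<xi> q k"
    by (simp add: quasiperiodic_iff_occ)
  have occ0: "occ \<xi> q 0" using cover[rule_format, of 0] by auto
  have "\<exists>k'. k < k' \<and> k' \<le> k + length q \<and> occ \<xi> q k'" for k
    using cover[rule_format, of "k + length q"] by auto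
  then obtain next_occ where next_occ:
    "\<And>k. k < next_occ k \<and> next_occ k \<le> k + length q \<and> occ \<xi> q (next_occ k)"
    by metis
  define p where "p n = (next_occ ^^ n) 0" for n
  have "occ \<xi> q (p n)" for n
    by (cases n) (auto simp: p_def occ0 next_occ)
  then have "occ_chain \<xi> q p"
    using next_occ by (simp add: occ_chain_def p_def)
  then show "\<exists>p. occ_chain \<xi> q p" by blast
next
  assume "\<exists>p. occ_chain \<xi> q p"
  then obtain p where chain: "occ_chain \<xi> q p" ..
  have "\<exists>k \<le> j. j < k + length q \<and> occ \<xi> q k" for j
  proof -
    obtain n where "p n \<le> j" "j < p (Suc n)" using occ_chain_covers[OF chain] by blast
    then show ?thesis using chain unfolding occ_chain_def
      by (metis less_le_trans)
  qed
  then show "quasiperiodic \<xi> q" by (simp add: quasiperiodic_iff_occ)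
qed

lemma factor_between_occ_in_Pq:
  assumes occ_a: "occ \<xi> q a" and occ_b: "occ \<xi> q b"
    and "a < b" and "b \<le> a + length q"
  shows "map \<xi> [a..<b] \<in> Pq q - {[]}"
proof -
  let ?v = "map \<xi> [a..<b]"
  have v_nonempty: "?v \<noteq> []" using \<open>a < b\<close> by simp
  have "?v = take (b - a) q"
    by (rule nth_equalityI) (use occ_a \<open>b \<le> a + length q\<close> in \<open>auto simp: occ_def\<close>)
  then have v_prefix: "prefix ?v q" by (metis take_is_prefix)
  have "q ! i = (?v @ q) ! i" if "i < length q" for i
  proof (cases "i < b - a")
    case True
    then show ?thesis using that occ_a by (simp add: nth_append occ_def)
  next
    case False
    then have "(?v @ q) ! i = q ! (i - (b - a))" using that by (simp add: nth_append)
    also have "\<dots> = \<xi> (b + (i - (b - a)))"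
      using that occ_b unfolding occ_def by (metis diff_le_self le_less_trans)
    also have "b + (i - (b - a)) = a + i" using False \<open>a < b\<close> by simp
    also have "\<xi> (a + i) = q ! i" using occ_a that by (simp add: occ_def)
    finally show ?thesis by simp
  qed
  then have "q = take (length q) (?v @ q)" by (intro nth_equalityI) (simp_all del: take_append)
  then have "prefix q (?v @ q)" by (metis take_is_prefix)
  then show ?thesis using v_prefix v_nonempty by (auto simp: Pq_def strict_prefix_def)
qed

text \<open>Cutting xi at the positions of an occurrence chain factorises it over P_q.\<close>
lemma occ_chain_imp_omega_power:
  assumes chain: "occ_chain \<xi> q p"
  shows "\<xi> \<in> omega_power (Pq q)"
proof -
  define w where "w n = map \<xi> [p n..<p (Suc n)]" for n
  have w_Pq: "w n \<in> Pq q - {[]}" for n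
  proof -
    have "occ \<xi> q (p n)" "occ \<xi> q (p (Suc n))" "p n < p (Suc n)" "p (Suc n) \<le> p n + length q"
      using chain by (auto simp: occ_chain_def)
    then show ?thesis unfolding w_def by (rule factor_between_occ_in_Pq)
  qed
  have concat_w: "concat (map w [0..<n]) = map \<xi> [0..<p n]" for n
  proof (induction n)
    case 0
    then show ?case using chain by (simp add: occ_chain_def)
  next
    case (Suc n)
    have "p n \<le> p (Suc n)" using chain by (simp add: occ_chain_def less_imp_le)
    then have "[0..<p (Suc n)] = [0..<p n] @ [p n..<p (Suc n)]"
      by (metis le0 upt_add_eq_append le_add_diff_inverse)
    then show ?case using Suc by (simp add: w_def)
  qed
  show ?thesis
    unfolding omega_power_def using w_Pq concat_w by (intro CollectI exI[of _ w]) simp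
qed

lemma Pq_nth:
  assumes "v \<in> Pq q" and "i < length q"
  shows "q ! i = (if i < length v then v ! i else q ! (i - length v))"
proof -
  obtain zs where q_eq: "q = v @ zs" using assms(1) by (auto simp: Pq_def prefix_def)
  obtain ys where vq_eq: "v @ q = q @ ys" using assms(1) by (auto simp: Pq_def prefix_def strict_prefix_def)
  have "q ! i = (v @ q) ! i" using vq_eq assms(2) by (simp add: nth_append)
  then show ?thesis using q_eq by (simp add: nth_append)
qed

text \<open>The occurrence at a cut point is obtained letter by letter by strong
  induction on the letter index, borrowing from the next cut point.\<close>
lemma omega_power_imp_occ_chain:
  assumes "\<xi> \<in> omega_power (Pq q)"
  shows "\<exists>p. occ_chain \<xi> q p"
proof -
  obtain w where w_Pq: "\<And>n. w n \<in> Pq q - {[]}"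
    and w_prefix: "\<And>n. oprefix (concat (map w [0..<n])) \<xi>"
    using assms unfolding omega_power_def by blast
  define p where "p n = length (concat (map w [0..<n]))" for n
  have p_Suc: "p (Suc n) = p n + length (w n)" for n by (simp add: p_def)
  have w_len: "0 < length (w n) \<and> length (w n) \<le> length q" for n
    using w_Pq[of n] by (auto simp: Pq_def dest: prefix_length_le)
  have letters: "\<xi> (p n + i) = w n ! i" if "i < length (w n)" for n i
    using w_prefix[of "Suc n"] that
    by (simp add: p_def oprefix_append_iff occ_def)
  have "\<xi> (p n + i) = q ! i" if "i < length q" for n i
    using that
  proof (induction i arbitrary: n rule: less_induct)
    case (less i)
    show ?case
    proof (cases "i < length (w n)")
      case True
      then show ?thesis using letters Pq_nth[OF _ less.prems, of "w n"] w_Pq by simp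
    next
      case False
      then have "\<xi> (p n + i) = \<xi> (p (Suc n) + (i - length (w n)))" by (simp add: p_Suc)
      also have "\<dots> = q ! (i - length (w n))"
      proof (rule less.IH)
        show "i - length (w n) < i" using False w_len[of n] by (metis diff_less length_greater_0_conv less_le_trans not_less)
        show "i - length (w n) < length q" using less.prems by simp
      qed
      finally show ?thesis using Pq_nth[OF _ less.prems, of "w n"] w_Pq False by simp
    qed
  qed
  then have "occ_chain \<xi> q p"
    using w_len by (auto simp: occ_chain_def occ_def p_def)
  then show ?thesis by blast
qed

lemma occ_chain_letters:
  assumes chain: "occ_chain \<xi> q p" and "set q \<subseteq> X"
  shows "\<xi> \<in> omega_words X"
  unfolding omega_words_def
proof (intro CollectI allI)
  fix j
  obtain n where n: "p n \<le> j" "j < p (Suc n)" using occ_chain_covers[OF chain] by blast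
  moreover have "p (Suc n) \<le> p n + length q" "occ \<xi> q (p n)"
    using chain unfolding occ_chain_def by blast+
  ultimately have "j - p n < length q" "occ \<xi> q (p n)" by auto
  then have "\<xi> (p n + (j - p n)) = q ! (j - p n)" by (simp add: occ_def)
  then have "\<xi> j = q ! (j - p n)" using n(1) by simp
  then show "\<xi> j \<in> X" using \<open>j - p n < length q\<close> assms(2) by auto
qed

theorem mainTheorem5:
  fixes X :: "'a set" and q :: "'a list"
  assumes "finite X" and "card X \<ge> 2"
    and "q \<in> lists X" and "q \<noteq> []"
  shows "{\<xi> \<in> omega_words X. quasiperiodic \<xi> q} = omega_power (Pq q)"
proof -
  have "set q \<subseteq> X" using assms(3) by auto
  then have letters: "\<xi> \<in> omega_words X" if "\<exists>p. occ_chain \<xi> q p" for \<xi>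
    using that occ_chain_letters by blast
  have quasiperiodic_iff_power: "quasiperiodic \<xi> q \<longleftrightarrow> \<xi> \<in> omega_power (Pq q)" for \<xi>
    using occ_chain_imp_omega_power omega_power_imp_occ_chain quasiperiodic_iff_occ_chain by blast
  show ?thesis
    using quasiperiodic_iff_power letters omega_power_imp_occ_chain by blast
qed

end
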